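(* For all $a_0,a_1,a_2,a_3\in\mathcal{A}(\mathbb{CP}^1_q)$, $$\int_h a_0\,(\partial a_1\,\bar\partial a_2)\,a_3=\int_h \sigma(a_3)\,a_0\,\partial a_1\,\bar\partial a_2 .$$
   Context: Fix $0<q<1$. Let $\mathcal{A}(SU_q(2))$ be the unital complex $*$-algebra generated by $a,c$ subject to $ac=qca$, $ac^*=qc^*a$, $cc^*=c^*c$, $a^*a+c^*c=aa^*+q^2cc^*=1$, a Hopf $*$-algebra with $\Delta a=a\otimes a-qc^*\otimes c$, $\Delta c=c\otimes a+a^*\otimes c$. Let $U_q(su(2))$ be the Hopf algebra generated by $K,K^{-1},E,F$ with $KK^{-1}=K^{-1}K=1$, $KE=qEK$, $KF=q^{-1}FK$, $EF-FE=(K^2-K^{-2})/(q-q^{-1})$, $\Delta K=K\otimes K$, $\Delta E=E\otimes K+K^{-1}\otimes E$, $\Delta F=F\otimes K+K^{-1}\otimes F$, $\epsilon(K)=1,\epsilon(E)=\epsilon(F)=0$, acting on $\mathcal{A}(SU_q(2))$ as a left module algebra with $K\triangleright a=q^{-1/2}a$, $K\triangleright c=q^{-1/2}c$, $K\triangleright a^*=q^{1/2}a^*$, $K\triangleright c^*=q^{1/2}c^*$, $E\triangleright a=-qc^*$, $E\triangleright c=a^*$, $E\triangleright a^*=E\triangleright c^*=0$, $F\triangleright a=F\triangleright c=0$, $F\triangleright a^*=c$, $F\triangleright c^*=-q^{-1}a$. Put $X_-=q^{-1/2}FK$, $X_+=q^{1/2}EK$. Let $\mathcal{L}_k=\{x:K\triangleright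 x=q^{k/2}x\}$ and $\mathcal{A}(\mathbb{CP}^1_q):=\mathcal{L}_0$. Forms: $\Omega^1(SU_q(2))$ is the bimodule free as a left module on $\omega_+,\omega_-,\omega_z$ with $\omega_\pm x=q^kx\omega_\pm$, $\omega_zx=q^{2k}x\omega_z$ for $x\in\mathcal{L}_k$; products of 1-forms are taken in the exterior algebra where $\omega_\pm\wedge\omega_\pm=0$ and $\omega_+\wedge\omega_-=-q^2\omega_-\wedge\omega_+$. For $f\in\mathcal{A}(\mathbb{CP}^1_q)$: $\partial f=(X_+\triangleright f)\omega_+$, $\bar\partial f=(X_-\triangleright f)\omega_-$. $\Omega^2(\mathbb{CP}^1_q):=\mathcal{A}(\mathbb{CP}^1_q)\,\omega_-\wedge\omega_+$. Let $h$ be the Haar state: the linear functional on $\mathcal{A}(SU_q(2))$ with $h(1)=1$ and $(\mathrm{id}\otimes h)\Delta(x)=h(x)1$ (faithful and positive). Its modular automorphism $\sigma$ is the unique algebra automorphism of $\mathcal{A}(SU_q(2))$ with $h(xy)=h(\sigma(y)x)$ for all $x,y$; it maps $\mathcal{A}(\mathbb{CP}^1_q)$ to itself. Define $\int_h:\Omega^2(\mathbb{CP}^1_q)\to\mathbb{C}$ by $\int_h x\,\omega_-\wedge\omega_+=h(x)$. *)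

theory Defs
  imports Complex_Main "HOL-Library.Poly_Mapping" "HOL-Library.Product_Plus"
begin

datatype gen = GA | GAst | GC | GCst

datatype word = Word "gen list"

instantiation word :: monoid_add
begin
definition zero_word :: word where "zero_word = Word []"
fun plus_word :: "word \<Rightarrow> word \<Rightarrow> word" where
  "plus_word (Word u) (Word v) = Word (u @ v)"
instance
proof
  fix a b c :: word
  show "a + b + c = a + (b + c)" by (cases a; cases b; cases c) simp
  show "0 + a = a" by (cases a) (simp add: zero_word_def)
  show "a + 0 = a" by (cases a) (simp add: zero_word_def)
qed
end

text \<open>Free unital complex algebra C<a,a*,c,c*>: finitely supported functions on words,
  product = concatenation convolution.\<close>
type_synonym falg = "word \<Rightarrow>\<^sub>0 complex"

text \<open>Algebraic tensor product of two copies of the free algebra.\<close>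
type_synonym ftens = "(word \<times> word) \<Rightarrow>\<^sub>0 complex"

definition sc :: "complex \<Rightarrow> falg" where "sc c = Poly_Mapping.single 0 c"
definition gen :: "gen \<Rightarrow> falg" where "gen g = Poly_Mapping.single (Word [g]) 1"
definition basis :: "word \<Rightarrow> falg" where "basis w = Poly_Mapping.single w 1"

abbreviation "ea \<equiv> gen GA"
abbreviation "east \<equiv> gen GAst"
abbreviation "ec \<equiv> gen GC"
abbreviation "ecst \<equiv> gen GCst"

text \<open>Defining relations of the *-algebra A(SU_q(2)) (with their adjoints).\<close>
definition relations :: "real \<Rightarrow> falg set" where
  "relations q = {
     ea * ec - sc q * (ec * ea),
     ea * ecst - sc q * (ecst * ea),
     ec * ecst - ecst * ec,
     east * ea + ecst * ec - 1,
     ea * east + sc (q^2) * (ec * ecst) - 1,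
     ecst * east - sc q * (east * ecst),
     ec * east - sc q * (east * ec) }"

inductive_set rel_ideal :: "real \<Rightarrow> falg set" for q where
  gen_in: "r \<in> relations q \<Longrightarrow> r \<in> rel_ideal q"
| zero_in: "0 \<in> rel_ideal q"
| add_in: "x \<in> rel_ideal q \<Longrightarrow> y \<in> rel_ideal q \<Longrightarrow> x + y \<in> rel_ideal q"
| mult_in: "x \<in> rel_ideal q \<Longrightarrow> u * x * v \<in> rel_ideal q"

definition suq_eq :: "real \<Rightarrow> falg \<Rightarrow> falg \<Rightarrow> bool" where
  "suq_eq q x y \<longleftrightarrow> x - y \<in> rel_ideal q"

definition word_eval :: "(gen \<Rightarrow> 'r::ring_1) \<Rightarrow> word \<Rightarrow> 'r" where
  "word_eval \<phi> w = (case w of Word gs \<Rightarrow> prod_list (map \<phi> gs))"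

definition ext_hom :: "(gen \<Rightarrow> 'r::ring_1) \<Rightarrow> (complex \<Rightarrow> 'r) \<Rightarrow> falg \<Rightarrow> 'r" where
  "ext_hom \<phi> emb f = (\<Sum>w\<in>Poly_Mapping.keys f. emb (Poly_Mapping.lookup f w) * word_eval \<phi> w)"

definition tens :: "falg \<Rightarrow> falg \<Rightarrow> ftens" where
  "tens x y = (\<Sum>u\<in>Poly_Mapping.keys x. \<Sum>v\<in>Poly_Mapping.keys y. Poly_Mapping.single (u, v) (Poly_Mapping.lookup x u * Poly_Mapping.lookup y v))"

definition tsc :: "complex \<Rightarrow> ftens" where "tsc c = Poly_Mapping.single 0 c"

definition delta_gen :: "real \<Rightarrow> gen \<Rightarrow> ftens" where
  "delta_gen q g = (case g of
      GA \<Rightarrow> tens ea ea - tsc q * tens ecst ec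
    | GC \<Rightarrow> tens ec ea + tens east ec
    | GAst \<Rightarrow> tens east east - tsc q * tens ec ecst
    | GCst \<Rightarrow> tens ecst east + tens ea ecst)"

definition Delta :: "real \<Rightarrow> falg \<Rightarrow> ftens" where
  "Delta q = ext_hom (delta_gen q) tsc"

definition id_tensor :: "(falg \<Rightarrow> complex) \<Rightarrow> ftens \<Rightarrow> falg" where
  "id_tensor h T = (\<Sum>p\<in>Poly_Mapping.keys T. sc (Poly_Mapping.lookup T p * h (basis (snd p))) * basis (fst p))"

definition is_haar_state :: "real \<Rightarrow> (falg \<Rightarrow> complex) \<Rightarrow> bool" where
  "is_haar_state q h \<longleftrightarrow>
     (\<forall>x\<in>rel_ideal q. h x = 0) \<and>
     (\<forall>x y. h (x + y) = h x + h y) \<and>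
     (\<forall>c x. h (sc c * x) = c * h x) \<and>
     h 1 = 1 \<and>
     (\<forall>x. suq_eq q (id_tensor h (Delta q x)) (sc (h x)))"

definition is_modular_aut :: "real \<Rightarrow> (falg \<Rightarrow> complex) \<Rightarrow> (falg \<Rightarrow> falg) \<Rightarrow> bool" where
  "is_modular_aut q h \<sigma> \<longleftrightarrow>
     (\<forall>x y. suq_eq q x y \<longrightarrow> suq_eq q (\<sigma> x) (\<sigma> y)) \<and>
     (\<forall>x y. suq_eq q (\<sigma> (x + y)) (\<sigma> x + \<sigma> y)) \<and>
     (\<forall>c x. suq_eq q (\<sigma> (sc c * x)) (sc c * \<sigma> x)) \<and>
     (\<forall>x y. suq_eq q (\<sigma> (x * y)) (\<sigma> x * \<sigma> y)) \<and>
     suq_eq q (\<sigma> 1) 1 \<and>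
     (\<forall>y. \<exists>x. suq_eq q (\<sigma> x) y) \<and>
     (\<forall>x y. suq_eq q (\<sigma> x) (\<sigma> y) \<longrightarrow> suq_eq q x y) \<and>
     (\<forall>x y. h (x * y) = h (\<sigma> y * x))"

text \<open>Weight: a, c in L_{-1}; a*, c* in L_1 (K acts by q^(k/2) on L_k).\<close>
definition gwt :: "gen \<Rightarrow> int" where
  "gwt g = (case g of GA \<Rightarrow> -1 | GC \<Rightarrow> -1 | GAst \<Rightarrow> 1 | GCst \<Rightarrow> 1)"

definition wt :: "word \<Rightarrow> int" where
  "wt w = (case w of Word gs \<Rightarrow> sum_list (map gwt gs))"

definition deg_scale :: "real \<Rightarrow> real \<Rightarrow> falg \<Rightarrow> falg" where
  "deg_scale q r f = Poly_Mapping.mapp (\<lambda>w c. complex_of_real (q powr (r * of_int (wt w))) * c) f"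

definition Kact :: "real \<Rightarrow> falg \<Rightarrow> falg" where "Kact q = deg_scale q (1/2)"
definition Kinv :: "real \<Rightarrow> falg \<Rightarrow> falg" where "Kinv q = deg_scale q (-1/2)"

definition E_gen :: "real \<Rightarrow> gen \<Rightarrow> falg" where
  "E_gen q g = (case g of GA \<Rightarrow> - (sc q * ecst) | GC \<Rightarrow> east | GAst \<Rightarrow> 0 | GCst \<Rightarrow> 0)"

definition F_gen :: "real \<Rightarrow> gen \<Rightarrow> falg" where
  "F_gen q g = (case g of GA \<Rightarrow> 0 | GC \<Rightarrow> 0 | GAst \<Rightarrow> ec | GCst \<Rightarrow> - (sc (inverse q) * ea))"

text \<open>Extension as a twisted derivation, using Delta(E) = E \<otimes> K + K^{-1} \<otimes> E
  (the same for F): h.(gx) = (h.g)(K.x) + (K^{-1}.g)(h.x).\<close>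
fun twder_list :: "real \<Rightarrow> (gen \<Rightarrow> falg) \<Rightarrow> gen list \<Rightarrow> falg" where
  "twder_list q D [] = 0"
| "twder_list q D (g # gs) = D g * Kact q (basis (Word gs)) + Kinv q (gen g) * twder_list q D gs"

definition twder :: "real \<Rightarrow> (gen \<Rightarrow> falg) \<Rightarrow> falg \<Rightarrow> falg" where
  "twder q D f = (\<Sum>w\<in>Poly_Mapping.keys f. sc (Poly_Mapping.lookup f w) * (case w of Word gs \<Rightarrow> twder_list q D gs))"

definition Eact :: "real \<Rightarrow> falg \<Rightarrow> falg" where "Eact q = twder q (E_gen q)"
definition Fact :: "real \<Rightarrow> falg \<Rightarrow> falg" where "Fact q = twder q (F_gen q)"

definition Xplus :: "real \<Rightarrow> falg \<Rightarrow> falg" where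
  "Xplus q x = sc (q powr (1/2)) * Eact q (Kact q x)"
definition Xminus :: "real \<Rightarrow> falg \<Rightarrow> falg" where
  "Xminus q x = sc (q powr (-1/2)) * Fact q (Kact q x)"

definition CP1 :: "real \<Rightarrow> falg set" where
  "CP1 q = {x. suq_eq q (Kact q x) x}"

text \<open>1-forms in the span of omega_+ and omega_-: (x, y) stands for x omega_+ + y omega_-.
  Right multiplication: omega_\<pm> x = q^k x omega_\<pm> for x in L_k.\<close>
type_synonym form1pm = "falg \<times> falg"

text \<open>2-forms x omega_- \<and> omega_+ are represented by their coefficient x.\<close>
type_synonym form2 = falg

definition del :: "real \<Rightarrow> falg \<Rightarrow> form1pm" where "del q f = (Xplus q f, 0)"
definition delbar :: "real \<Rightarrow> falg \<Rightarrow> form1pm" where "delbar q f = (0, Xminus q f)"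

text \<open>Wedge product, using omega_\<pm> \<and> omega_\<pm> = 0, omega_+ \<and> omega_- = -q^2 omega_- \<and> omega_+:
  (x+ w+ + x- w-) \<and> (y+ w+ + y- w-) = (x- (w- y+) - q^2 x+ (w+ y-)) ...\<close>
definition wedge :: "real \<Rightarrow> form1pm \<Rightarrow> form1pm \<Rightarrow> form2" where
  "wedge q \<alpha> \<beta> = snd \<alpha> * deg_scale q 1 (fst \<beta>) - sc (q^2) * (fst \<alpha> * deg_scale q 1 (snd \<beta>))"

definition lmul2 :: "falg \<Rightarrow> form2 \<Rightarrow> form2" where "lmul2 a x = a * x"

text \<open>(x omega_- \<and> omega_+) a = x q^(2k) a omega_- \<and> omega_+ for a in L_k.\<close>
definition rmul2 :: "real \<Rightarrow> form2 \<Rightarrow> falg \<Rightarrow> form2" where "rmul2 q x a = x * deg_scale q 2 a"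

definition int_h :: "(falg \<Rightarrow> complex) \<Rightarrow> form2 \<Rightarrow> complex" where "int_h h x = h x"

end

theory Submission imports Defs begin

text \<open>
  Right multiplication of omega_- \<and> omega_+ by a3 twists a3 by the grading operator
  deg_scale q 2 = K^4. Since the defining relations are homogeneous, each deg_scale q r is an
  algebra endomorphism of the free algebra preserving the defining ideal; as K fixes a3 modulo
  that ideal, so does K^4, so the twist disappears. The modular property of h then moves a3
  to the front as \<sigma>(a3), h being insensitive to the ideal.
\<close>

lemma poly_mapping_single_induct:
  fixes f :: "'a \<Rightarrow>\<^sub>0 'b::comm_monoid_add"
  assumes "P 0" and "\<And>f k c. P f \<Longrightarrow> P (f + Poly_Mapping.single k c)"
  shows "P f"
proof (induction f rule: update_induct)
  case const
  show ?case using assms(1) .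
next
  case (update f a b)
  have "Poly_Mapping.update a b f = f + Poly_Mapping.single a b"
    using update(1)
    by (intro poly_mapping_eqI) (auto simp: lookup_update lookup_add lookup_single in_keys_iff when_def)
  then show ?case using assms(2)[OF update(3)] by simp
qed

lemma lookup_deg_scale:
  "Poly_Mapping.lookup (deg_scale q r f) w = complex_of_real (q powr (r * of_int (wt w))) * Poly_Mapping.lookup f w"
  unfolding deg_scale_def by (simp add: lookup_mapp when_def in_keys_iff)

lemma deg_scale_zero: "deg_scale q r 0 = 0"
  by (intro poly_mapping_eqI) (simp add: lookup_deg_scale)

lemma deg_scale_add: "deg_scale q r (f + g) = deg_scale q r f + deg_scale q r g"
  by (intro poly_mapping_eqI) (simp add: lookup_deg_scale lookup_add algebra_simps)

lemma deg_scale_diff: "deg_scale q r (f - g) = deg_scale q r f - deg_scale q r g"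
  by (intro poly_mapping_eqI) (simp add: lookup_deg_scale lookup_minus algebra_simps)

lemma deg_scale_single:
  "deg_scale q r (Poly_Mapping.single w c) = Poly_Mapping.single w (complex_of_real (q powr (r * of_int (wt w))) * c)"
  by (intro poly_mapping_eqI) (simp add: lookup_deg_scale lookup_single when_def)

lemma deg_scale_deg_scale: "deg_scale q r (deg_scale q s f) = deg_scale q (r + s) f"
  by (intro poly_mapping_eqI) (simp add: lookup_deg_scale powr_add distrib_right)

lemma wt_add: "wt (u + v) = wt u + wt v"
  by (cases u; cases v) (simp add: wt_def)

lemma wt_zero: "wt 0 = 0"
  by (simp add: wt_def zero_word_def)

lemma deg_scale_mult_single:
  "deg_scale q r (Poly_Mapping.single k c * g) = deg_scale q r (Poly_Mapping.single k c) * deg_scale q r g"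
  by (induction g rule: poly_mapping_single_induct)
    (simp_all add: deg_scale_zero deg_scale_add deg_scale_single mult_single wt_add powr_add
      distrib_left algebra_simps)

lemma deg_scale_mult: "deg_scale q r (f * g) = deg_scale q r f * deg_scale q r g"
  by (induction f rule: poly_mapping_single_induct)
    (simp_all add: deg_scale_zero distrib_right deg_scale_add deg_scale_mult_single)

lemma deg_scale_sc: "q > 0 \<Longrightarrow> deg_scale q r (sc c) = sc c"
  by (simp add: sc_def deg_scale_single wt_zero)

lemma deg_scale_one: "q > 0 \<Longrightarrow> deg_scale q r 1 = 1"
  using deg_scale_sc[of q r 1] by (simp add: sc_def)

lemma deg_scale_gen: "deg_scale q r (gen g) = sc (q powr (r * of_int (gwt g))) * gen g"
  by (simp add: gen_def sc_def deg_scale_single mult_single wt_def)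

lemma sc_mult: "sc a * sc b = sc (a * b)"
  by (simp add: sc_def mult_single)

lemma mult_sc_commute: "x * sc c = sc c * x"
  by (induction x rule: poly_mapping_single_induct)
    (simp_all add: sc_def distrib_left distrib_right mult_single mult.commute)

lemma sc_mult_mem_rel_ideal: "x \<in> rel_ideal q \<Longrightarrow> sc c * x \<in> rel_ideal q"
  using mult_in[of x q "sc c" 1] by simp

lemma relation_homogeneous:
  assumes "q > 0" and "x \<in> relations q"
  shows "\<exists>c. deg_scale q r x = sc c * x"
proof -
  define s where "s = q powr r"
  have "s > 0" using assms(1) by (simp add: s_def)
  then have inverse: "inverse (complex_of_real s) * complex_of_real s = 1"
    "complex_of_real s * inverse (complex_of_real s) = 1"
    by simp_all
  have generators: "deg_scale q r ea = sc (inverse s) * ea" "deg_scale q r ec = sc (inverse s) * ec"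
    "deg_scale q r east = sc s * east" "deg_scale q r ecst = sc s * ecst"
    by (simp_all add: deg_scale_gen gwt_def s_def powr_minus)
  have commute: "gen g * (sc c * y) = sc c * (gen g * y)" for g c y
    by (metis mult.assoc mult_sc_commute)
  have pull: "sc a * (sc b * y) = sc (a * b) * y" for a b y
    by (simp add: mult.assoc[symmetric] sc_mult)
  have one: "sc 1 = 1" by (simp add: sc_def)
  from assms(2) show ?thesis
    unfolding relations_def
    by (elim insertE emptyE)
      ((simp_all add: deg_scale_mult deg_scale_add deg_scale_diff deg_scale_sc[OF assms(1)]
        deg_scale_one[OF assms(1)] generators mult.assoc pull commute inverse one
        right_diff_distrib distrib_left), (metis mult.commute one mult_1)+)
qed

lemma deg_scale_mem_rel_ideal:
  assumes "q > 0" and "x \<in> rel_ideal q"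
  shows "deg_scale q r x \<in> rel_ideal q"
  using assms(2)
proof (induction rule: rel_ideal.induct)
  case (gen_in x)
  then obtain c where "deg_scale q r x = sc c * x"
    using relation_homogeneous[OF assms(1)] by blast
  then show ?case by (simp add: sc_mult_mem_rel_ideal rel_ideal.gen_in gen_in)
next
  case zero_in
  show ?case by (simp add: deg_scale_zero rel_ideal.zero_in)
next
  case (add_in x y)
  then show ?case by (simp add: deg_scale_add rel_ideal.add_in)
next
  case (mult_in x u v)
  then show ?case by (simp add: deg_scale_mult rel_ideal.mult_in)
qed

lemma deg_scale_cong:
  assumes "q > 0" and "suq_eq q x y"
  shows "suq_eq q (deg_scale q r x) (deg_scale q r y)"
  using deg_scale_mem_rel_ideal[OF assms(1), of "x - y"] assms(2)
  by (simp add: suq_eq_def deg_scale_diff)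

lemma suq_eq_trans: "suq_eq q x y \<Longrightarrow> suq_eq q y z \<Longrightarrow> suq_eq q x z"
  using add_in[of "x - y" q "y - z"] by (simp add: suq_eq_def)

lemma deg_scale_fixed_multiple:
  assumes "q > 0" and "suq_eq q (deg_scale q r x) x"
  shows "suq_eq q (deg_scale q (of_nat n * r) x) x"
proof (induction n)
  case 0
  have "deg_scale q 0 x = x"
    using assms(1) by (intro poly_mapping_eqI) (simp add: lookup_deg_scale)
  then show ?case by (simp add: suq_eq_def zero_in)
next
  case (Suc n)
  have "deg_scale q (of_nat (Suc n) * r) x = deg_scale q r (deg_scale q (of_nat n * r) x)"
    by (simp add: deg_scale_deg_scale algebra_simps)
  moreover have "suq_eq q (deg_scale q r (deg_scale q (of_nat n * r) x)) (deg_scale q r x)"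
    using deg_scale_cong[OF assms(1) Suc.IH] .
  ultimately show ?case
    using suq_eq_trans[OF _ assms(2)] by simp
qed

lemma haar_state_cong:
  assumes "is_haar_state q h" and "suq_eq q x y"
  shows "h x = h y"
proof -
  have additive: "h (u + v) = h u + h v" for u v
    using assms(1) unfolding is_haar_state_def by (elim conjE) (erule spec2)
  have "h (x - y) = 0"
    using assms unfolding is_haar_state_def suq_eq_def by (elim conjE) (erule bspec)
  then show ?thesis
    using additive[of y "x - y"] by simp
qed

lemma suq_eq_mult_right: "suq_eq q x y \<Longrightarrow> suq_eq q (x * z) (y * z)"
  using mult_in[of "x - y" q 1 z] by (simp add: suq_eq_def left_diff_distrib)

lemma modular_aut_cong: "is_modular_aut q h \<sigma> \<Longrightarrow> suq_eq q x y \<Longrightarrow> suq_eq q (\<sigma> x) (\<sigma> y)"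
  unfolding is_modular_aut_def by blast

lemma modular_aut_twist: "is_modular_aut q h \<sigma> \<Longrightarrow> h (x * y) = h (\<sigma> y * x)"
  unfolding is_modular_aut_def by blast

theorem lemma5p3:
  fixes q :: real and h :: "falg \<Rightarrow> complex" and \<sigma> :: "falg \<Rightarrow> falg"
    and a0 a1 a2 a3 :: falg
  assumes "0 < q" and "q < 1"
    and "is_haar_state q h"
    and "is_modular_aut q h \<sigma>"
    and "a0 \<in> CP1 q" and "a1 \<in> CP1 q" and "a2 \<in> CP1 q" and "a3 \<in> CP1 q"
  shows "int_h h (rmul2 q (lmul2 a0 (wedge q (del q a1) (delbar q a2))) a3)
       = int_h h (lmul2 (\<sigma> a3 * a0) (wedge q (del q a1) (delbar q a2)))"
proof -
  define w where "w = a0 * wedge q (del q a1) (delbar q a2)"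
  have "suq_eq q (deg_scale q (of_nat 4 * (1/2)) a3) a3"
    using assms(8) by (intro deg_scale_fixed_multiple[OF assms(1)]) (simp add: CP1_def Kact_def)
  then have "suq_eq q (\<sigma> (deg_scale q 2 a3)) (\<sigma> a3)"
    by (intro modular_aut_cong[OF assms(4)]) simp
  then have "h (\<sigma> (deg_scale q 2 a3) * w) = h (\<sigma> a3 * w)"
    by (intro haar_state_cong[OF assms(3)] suq_eq_mult_right)
  then have "h (w * deg_scale q 2 a3) = h (\<sigma> a3 * w)"
    using modular_aut_twist[OF assms(4), of w "deg_scale q 2 a3"] by (rule trans[rotated])
  then show ?thesis
    unfolding int_h_def rmul2_def lmul2_def w_def by (simp add: mult.assoc)
qed

end
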